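(* Let $n$ be a positive odd integer. Then, modulo $(1-aq^n)(a-q^n)$, $$ \sum_{k=0}^{n-1}\frac{(aq;q^2)_k\,(q/a;q^2)_k}{(q^2;q^2)_k^2}\, x^k \equiv \sum_{k=0}^{(n-1)/2}{(n-1)/2\brack k}_{q^2}^2 q^{k^2-nk} (-x)^k\, (x;q^2)_{(n-1)/2-k}. $$
   Context: $a,q,x$ are indeterminates. The $q$-shifted factorial is $(y;q)_0=1$ and $(y;q)_m=(1-y)(1-yq)\cdots(1-yq^{m-1})$ for $m\geqslant1$. The $q$-binomial coefficient is ${N\brack k}_q=\frac{(q;q)_N}{(q;q)_k(q;q)_{N-k}}$ for $0\leqslant k\leqslant N$ and $0$ otherwise; ${N\brack k}_{q^2}$ is this with $q$ replaced by $q^2$. For rational functions $A,B$ and a polynomial $P$, $A\equiv B\pmod P$ means $A-B=P\cdot C/D$ for polynomials $C,D$ with $D$ coprime to $P$. *)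

theory Defs
  imports "HOL-Computational_Algebra.Polynomial" "HOL-Computational_Algebra.Fraction_Field"
begin

text \<open>Polynomials in the three indeterminates a, q, x over the rationals are modelled as
  nested univariate polynomials: the ring rat poly poly poly, where the innermost variable
  is a, the middle one is q and the outermost one is x.\<close>

type_synonym mpoly3 = "rat poly poly poly"
type_synonym rfun3 = "mpoly3 fract"

definition var_a :: mpoly3 where "var_a = [:[:[:0, 1:]:]:]"
definition var_q :: mpoly3 where "var_q = [:[:0, 1:]:]"
definition var_x :: mpoly3 where "var_x = [:0, 1:]"

definition emb :: "mpoly3 \<Rightarrow> rfun3" where "emb p = Fract p 1"

definition A :: rfun3 where "A = emb var_a"
definition Q :: rfun3 where "Q = emb var_q"
definition X :: rfun3 where "X = emb var_x"

definition qpoch :: "'a::comm_ring_1 \<Rightarrow> 'a \<Rightarrow> nat \<Rightarrow> 'a" where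
  "qpoch y q m = (\<Prod>i<m. 1 - y * q ^ i)"

definition qbinom :: "'a::field \<Rightarrow> nat \<Rightarrow> nat \<Rightarrow> 'a" where
  "qbinom q N k = (if k \<le> N then qpoch q q N / (qpoch q q k * qpoch q q (N - k)) else 0)"

definition rcong :: "rfun3 \<Rightarrow> rfun3 \<Rightarrow> mpoly3 \<Rightarrow> bool" where
  "rcong F G P \<longleftrightarrow> (\<exists>C D. coprime D P \<and> F - G = emb P * emb C / emb D)"

end

theory Submission
  imports Defs "HOL-Computational_Algebra.Polynomial_Factorial" "HOL-Computational_Algebra.Field_as_Ring"
begin

text \<open>
  The left-hand side depends on a only through the factor pairs (1 - a y)(1 - y / a) with
  y = q^(2i+1), and (1 - a y)(1 - y / a) - (1 - b y)(1 - y / b) = (1 - a b)(a - b) y / (a b).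
  For b = q^n this is a multiple of the modulus, and all denominators occurring (a, q and the
  factors 1 - q^(2j)) are coprime to the modulus, so the left-hand side is congruent to its
  value at a = q^n. Writing p = q^2 and n = 2m + 1, that value is a sum terminating at k = m
  whose coefficients are (-1)^k [m,k] [m+k,k] p^(k choose 2 - mk). Expanding the right-hand
  side in powers of x, its coefficients are evaluated to the same numbers by the
  q-Chu-Vandermonde identity, i.e. by comparing coefficients in (x;p)_(m+N) = (x;p)_m (x p^m;p)_N.
\<close>

section \<open>q-binomial coefficients and the q-Chu-Vandermonde identity\<close>

lemma qpoch_0 [simp]: "qpoch y q 0 = 1"
  by (simp add: qpoch_def)

lemma qpoch_Suc: "qpoch y q (Suc m) = qpoch y q m * (1 - y * q ^ m)"
  by (simp add: qpoch_def)

lemma qpoch_add: "qpoch y q (m + k) = qpoch y q m * qpoch (y * q ^ m) q k"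
  by (induction k) (simp_all add: qpoch_Suc power_add algebra_simps)

lemma qpoch_eq_0: "y * q ^ m = 1 \<Longrightarrow> m < k \<Longrightarrow> qpoch y q k = 0"
  unfolding qpoch_def by (rule prod_zero) auto

lemma qpoch_mult_qpoch: "qpoch y q k * qpoch z q k = (\<Prod>i<k. (1 - y * q ^ i) * (1 - z * q ^ i))"
  by (simp add: qpoch_def prod.distrib)

lemma poly_qpoch: "poly (qpoch y q k) x = qpoch (poly y x) (poly q x) k"
  by (simp add: qpoch_def poly_prod)

lemma qpoch_self_neq_0:
  fixes p :: "'a::idom"
  assumes "\<And>i. 0 < i \<Longrightarrow> p ^ i \<noteq> 1"
  shows "qpoch p p k \<noteq> 0"
  using assms[of "Suc i" for i] by (auto simp: qpoch_def)

lemma qpoch_reciprocal_power: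
  fixes p u :: "'a::comm_ring_1"
  assumes up: "u * p = 1"
  shows "k \<le> m \<Longrightarrow> qpoch (u ^ m) p k * qpoch p p (m - k)
           = (-1) ^ k * p ^ (k choose 2) * u ^ (m * k) * qpoch p p m"
proof (induction k)
  case 0
  then show ?case
    by (simp add: numeral_2_eq_2)
next
  case (Suc k)
  define d where "d = m - Suc k"
  have m: "m = Suc d + k" and mk: "m - k = Suc d" "m - Suc k = d"
    using Suc.prems by (simp_all add: d_def)
  have "u ^ m * p ^ k = u ^ Suc d * (u * p) ^ k"
    unfolding m by (simp add: power_add power_mult_distrib mult_ac)
  then have shift: "u ^ m * p ^ k = u ^ Suc d"
    by (simp add: up)
  have "(u * p) ^ Suc d = 1"
    by (simp add: up)
  then have reflect: "1 - u ^ Suc d = - (u ^ Suc d) * (1 - p * p ^ d)"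
    by (simp add: algebra_simps power_mult_distrib)
  have "qpoch (u ^ m) p (Suc k) * qpoch p p (m - Suc k) = qpoch (u ^ m) p k * (1 - u ^ Suc d) * qpoch p p d"
    by (simp only: qpoch_Suc shift mk)
  also have "\<dots> = - (u ^ Suc d) * (qpoch (u ^ m) p k * qpoch p p (m - k))"
    unfolding reflect mk qpoch_Suc by (simp add: mult_ac)
  also have "\<dots> = - (u ^ Suc d) * ((-1) ^ k * p ^ (k choose 2) * u ^ (m * k) * qpoch p p m)"
    using Suc by simp
  also have "\<dots> = (-1) ^ Suc k * p ^ (Suc k choose 2) * u ^ (m * Suc k) * qpoch p p m"
    unfolding shift[symmetric] by (simp add: numeral_2_eq_2 power_add mult_ac)
  finally show ?case .
qed

lemma qbinom_eq_0: "j < k \<Longrightarrow> qbinom p j k = 0"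
  by (simp add: qbinom_def)

lemma qbinom_symmetric: "k \<le> j \<Longrightarrow> qbinom p j (j - k) = qbinom p j k"
  by (simp add: qbinom_def mult.commute)

context
  fixes p :: "'a::field"
  assumes not_root_of_unity: "\<And>i. 0 < i \<Longrightarrow> p ^ i \<noteq> 1"
begin

lemma qbinom_0 [simp]: "qbinom p j 0 = 1"
  using qpoch_self_neq_0[OF not_root_of_unity] by (simp add: qbinom_def)

lemma qbinom_self [simp]: "qbinom p j j = 1"
  using qpoch_self_neq_0[OF not_root_of_unity] by (simp add: qbinom_def)

lemma qbinom_Suc_Suc:
  "qbinom p (Suc j) (Suc i) = qbinom p j (Suc i) + p ^ (j - i) * qbinom p j i"
proof (cases "i < j")
  case True
  define r where "r = j - Suc i"
  define F where "F = qpoch p p"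
  define a b where "a = 1 - p ^ Suc i" and "b = 1 - p ^ Suc r"
  have F_nz: "F k \<noteq> 0" for k
    unfolding F_def by (rule qpoch_self_neq_0[OF not_root_of_unity])
  have "a \<noteq> 0" "b \<noteq> 0"
    using not_root_of_unity[of "Suc i"] not_root_of_unity[of "Suc r"] by (auto simp: a_def b_def)
  have F_Suc: "F (Suc k) = F k * (1 - p ^ Suc k)" for k
    by (simp add: F_def qpoch_Suc)
  have "Suc j = Suc r + Suc i"
    using True by (simp add: r_def)
  then have pj: "p ^ Suc j = (1 - b) * (1 - a)"
    by (simp only: power_add a_def b_def) simp
  have F_Suc_j: "F (Suc j) = F j * (b + (1 - b) * a)"
    unfolding F_Suc pj by (simp add: algebra_simps)
  have ji: "j - i = Suc r" "j - Suc i = r"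
    using True by (simp_all add: r_def)
  have F_Suc_i: "F (Suc i) = F i * a" and F_Suc_r: "F (Suc r) = F r * b"
    by (simp_all add: F_Suc a_def b_def del: power_Suc)
  have "qbinom p (Suc j) (Suc i) = F j * (b + (1 - b) * a) / (F i * a * (F r * b))"
    using True by (simp add: qbinom_def F_def[symmetric] ji F_Suc_j F_Suc_i F_Suc_r)
  also have "\<dots> = F j / (F i * a * F r) + (1 - b) * (F j / (F i * (F r * b)))"
    using F_nz \<open>a \<noteq> 0\<close> \<open>b \<noteq> 0\<close> by (simp add: field_simps)
  also have "\<dots> = qbinom p j (Suc i) + p ^ (j - i) * qbinom p j i"
    using True by (simp add: qbinom_def F_def[symmetric] ji F_Suc_i F_Suc_r b_def del: power_Suc)
  finally show ?thesis .
next
  case False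
  then show ?thesis
    by (cases "i = j") (simp_all add: qbinom_eq_0)
qed

text \<open>qpoch [:0, c:] [:p:] j is the polynomial (c x; p)_j in x; its expansion is Rothe's
  finite q-binomial theorem.\<close>

lemma coeff_qpoch_poly:
  "coeff (qpoch [:0, c:] [:p:] j) i = qbinom p j i * (-1) ^ i * p ^ (i choose 2) * c ^ i"
proof (induction j arbitrary: i)
  case 0
  then show ?case
    by (cases i) (simp_all add: qbinom_eq_0 numeral_2_eq_2)
next
  case (Suc j)
  have factor: "1 - [:0, c:] * [:p:] ^ j = [:1, - (c * p ^ j):]"
    by (simp add: poly_const_pow one_pCons mult.commute)
  show ?case
  proof (cases i)
    case 0
    then show ?thesis
      using Suc.IH unfolding qpoch_Suc factor by (simp add: numeral_2_eq_2)
  next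
    case (Suc i)
    have shift: "p ^ j * qbinom p j i * p ^ (i choose 2) = p ^ (j - i) * qbinom p j i * p ^ (Suc i choose 2)"
    proof (cases "i \<le> j")
      case True
      then have "j - i + (Suc i choose 2) = j + (i choose 2)"
        by (simp add: numeral_2_eq_2)
      then have "p ^ j * p ^ (i choose 2) = p ^ (j - i) * p ^ (Suc i choose 2)"
        by (simp flip: power_add)
      then show ?thesis
        by (simp add: mult_ac)
    qed (simp add: qbinom_eq_0)
    have "coeff (qpoch [:0, c:] [:p:] (Suc j)) (Suc i)
        = coeff (qpoch [:0, c:] [:p:] j) (Suc i) - c * p ^ j * coeff (qpoch [:0, c:] [:p:] j) i"
      unfolding qpoch_Suc factor by simp
    also have "\<dots> = qbinom p j (Suc i) * (-1) ^ Suc i * p ^ (Suc i choose 2) * c ^ Suc i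
        + (p ^ j * qbinom p j i * p ^ (i choose 2)) * ((-1) ^ Suc i * c ^ Suc i)"
      unfolding Suc.IH by (simp add: algebra_simps)
    also have "\<dots> = qbinom p (Suc j) (Suc i) * (-1) ^ Suc i * p ^ (Suc i choose 2) * c ^ Suc i"
      unfolding shift qbinom_Suc_Suc by (simp add: algebra_simps)
    finally show ?thesis
      unfolding Suc .
  qed
qed

lemma q_Vandermonde:
  "(\<Sum>k\<le>N. qbinom p m k * qbinom p N k * p ^ ((k choose 2) + ((N - k) choose 2) + m * (N - k)))
     = qbinom p (m + N) N * p ^ (N choose 2)"
proof -
  let ?E = "\<lambda>c j. qpoch [:0, c:] [:p:] j"
  have coeff_product: "coeff (?E 1 m) k * coeff (?E (p ^ m) N) (N - k) = (-1) ^ N *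
      (qbinom p m k * qbinom p N k * p ^ ((k choose 2) + ((N - k) choose 2) + m * (N - k)))"
    if "k \<le> N" for k
  proof -
    have sign: "(-1::'a) ^ k * (-1) ^ (N - k) = (-1) ^ N"
      using that by (simp flip: power_add)
    show ?thesis
      unfolding coeff_qpoch_poly qbinom_symmetric[OF that] power_add power_mult sign[symmetric]
      by (simp add: mult_ac)
  qed
  have "(-1) ^ N * (qbinom p (m + N) N * p ^ (N choose 2)) = coeff (?E 1 (m + N)) N"
    by (simp add: coeff_qpoch_poly)
  also have "\<dots> = coeff (?E 1 m * ?E (p ^ m) N) N"
    by (simp add: qpoch_add poly_const_pow)
  also have "\<dots> = (\<Sum>k\<le>N. coeff (?E 1 m) k * coeff (?E (p ^ m) N) (N - k))"
    by (rule coeff_mult)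
  also have "\<dots> = (-1) ^ N * (\<Sum>k\<le>N. qbinom p m k * qbinom p N k
      * p ^ ((k choose 2) + ((N - k) choose 2) + m * (N - k)))"
    by (simp add: coeff_product sum_distrib_left)
  finally show ?thesis
    by simp
qed

lemma qbinom_mult:
  "k \<le> N \<Longrightarrow> N \<le> m \<Longrightarrow> qbinom p m N * qbinom p N k = qbinom p m k * qbinom p (m - k) (N - k)"
  using qpoch_self_neq_0[OF not_root_of_unity]
  by (simp add: qbinom_def field_simps)

lemma qbinom_square_convolution:
  assumes "N \<le> m"
  shows "(\<Sum>k\<le>N. (qbinom p m k)\<^sup>2 * qbinom p (m - k) (N - k)
            * p ^ ((k choose 2) + ((N - k) choose 2) + m * (N - k)))
       = qbinom p m N * qbinom p (m + N) N * p ^ (N choose 2)"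
proof -
  have "(qbinom p m k)\<^sup>2 * qbinom p (m - k) (N - k) = qbinom p m N * (qbinom p m k * qbinom p N k)"
    if "k \<le> N" for k
    using qbinom_mult[OF that assms] by (simp add: power2_eq_square algebra_simps)
  then show ?thesis
    by (simp add: q_Vandermonde sum_distrib_left mult.assoc flip: q_Vandermonde)
qed

section \<open>The terminating sum at a = q^n\<close>

lemma qpoch_pair_closed_form:
  assumes up: "u * p = 1" and "k \<le> m"
  shows "qpoch (p ^ Suc m) p k * qpoch (u ^ m) p k / (qpoch p p k)\<^sup>2
       = (-1) ^ k * qbinom p m k * qbinom p (m + k) k * p ^ (k choose 2) * u ^ (m * k)"
proof -
  have F_nz: "qpoch p p j \<noteq> 0" for j
    by (rule qpoch_self_neq_0[OF not_root_of_unity])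
  have "qpoch p p (m + k) = qpoch p p m * qpoch (p ^ Suc m) p k"
    by (simp add: qpoch_add)
  moreover have "qpoch (u ^ m) p k * qpoch p p (m - k) = (-1) ^ k * p ^ (k choose 2) * u ^ (m * k) * qpoch p p m"
    by (rule qpoch_reciprocal_power[OF up \<open>k \<le> m\<close>])
  ultimately show ?thesis
    using \<open>k \<le> m\<close> F_nz[of m] F_nz[of k] F_nz[of "m - k"]
    by (simp add: qbinom_def field_simps power2_eq_square)
qed

lemma terminating_identity_poly:
  assumes up: "u * p = 1"
  shows "(\<Sum>k\<le>m. smult ((-1) ^ k * (qbinom p m k)\<^sup>2 * p ^ (k choose 2) * u ^ (m * k))
                       (monom 1 k * qpoch [:0, 1:] [:p:] (m - k)))
       = (\<Sum>k\<le>m. monom ((-1) ^ k * qbinom p m k * qbinom p (m + k) k * p ^ (k choose 2) * u ^ (m * k)) k)"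
    (is "?R = ?L")
proof (rule poly_eqI)
  fix N
  define T where "T k = (qbinom p m k)\<^sup>2 * qbinom p (m - k) (N - k)
    * p ^ ((k choose 2) + ((N - k) choose 2) + m * (N - k))" for k
  have summand: "(-1) ^ k * (qbinom p m k)\<^sup>2 * p ^ (k choose 2) * u ^ (m * k)
      * coeff (qpoch [:0, 1:] [:p:] (m - k)) (N - k) = (-1) ^ N * u ^ (m * N) * T k"
    if "k \<le> N" for k
  proof -
    have sign: "(-1::'a) ^ k * (-1) ^ (N - k) = (-1) ^ N"
      using that by (simp flip: power_add)
    have "m * N = m * k + m * (N - k)"
      using that by (simp add: diff_mult_distrib2)
    then have "u ^ (m * N) * p ^ (m * (N - k)) = u ^ (m * k) * (u * p) ^ (m * (N - k))"
      by (simp add: power_add power_mult_distrib)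
    then have weight: "u ^ (m * k) = u ^ (m * N) * p ^ (m * (N - k))"
      by (simp add: up)
    show ?thesis
      unfolding coeff_qpoch_poly T_def weight sign[symmetric] power_add by (simp add: mult_ac)
  qed
  have coeff_R: "coeff ?R N = (\<Sum>k\<le>m. if k \<le> N then (-1) ^ N * u ^ (m * N) * T k else 0)"
    by (auto simp: coeff_sum coeff_monom_mult summand not_less intro!: sum.cong)
  have coeff_L: "coeff ?L N = (if N \<le> m
      then (-1) ^ N * qbinom p m N * qbinom p (m + N) N * p ^ (N choose 2) * u ^ (m * N) else 0)"
    by (simp add: coeff_sum coeff_monom)
  show "coeff ?R N = coeff ?L N"
  proof (cases "N \<le> m")
    case True
    then have "{k \<in> {..m}. k \<le> N} = {..N}"
      by auto
    then have "coeff ?R N = (-1) ^ N * u ^ (m * N) * (\<Sum>k\<le>N. T k)"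
      unfolding coeff_R sum.inter_filter[symmetric, OF finite_atMost] by (simp add: sum_distrib_left)
    then show ?thesis
      using True by (simp add: coeff_L T_def qbinom_square_convolution)
  next
    case False
    then have "T k = 0" if "k \<le> m" for k
      using that by (simp add: T_def qbinom_eq_0)
    then show ?thesis
      using False by (simp add: coeff_R coeff_L)
  qed
qed

lemma terminating_identity:
  assumes "p \<noteq> 0"
  shows "(\<Sum>k\<le>m. qpoch (p ^ Suc m) p k * qpoch (inverse p ^ m) p k / (qpoch p p k)\<^sup>2 * x ^ k)
       = (\<Sum>k\<le>m. (-1) ^ k * (qbinom p m k)\<^sup>2 * p ^ (k choose 2) * inverse p ^ (m * k)
                   * x ^ k * qpoch x p (m - k))"
proof -
  have up: "inverse p * p = 1"
    using assms by simp
  have "(\<Sum>k\<le>m. qpoch (p ^ Suc m) p k * qpoch (inverse p ^ m) p k / (qpoch p p k)\<^sup>2 * x ^ k)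
      = (\<Sum>k\<le>m. (-1) ^ k * qbinom p m k * qbinom p (m + k) k * p ^ (k choose 2) * inverse p ^ (m * k) * x ^ k)"
    by (intro sum.cong refl) (simp only: atMost_iff qpoch_pair_closed_form[OF up])
  also have "\<dots> = (\<Sum>k\<le>m. (-1) ^ k * (qbinom p m k)\<^sup>2 * p ^ (k choose 2) * inverse p ^ (m * k)
                   * x ^ k * qpoch x p (m - k))"
    using arg_cong[OF terminating_identity_poly[OF up, of m], of "\<lambda>f. poly f x"]
    by (simp add: poly_sum poly_monom poly_qpoch mult_ac)
  finally show ?thesis .
qed

end

lemma power_int_odd_quadratic:
  fixes q :: "'a::field"
  assumes "q \<noteq> 0"
  shows "q powi (int k ^ 2 - int (2 * m + 1) * int k) = (q ^ 2) ^ (k choose 2) * inverse (q ^ 2) ^ (m * k)"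
proof -
  have "2 * (k choose 2) = k * (k - 1)"
  proof (induction k)
    case (Suc k)
    then show ?case
      by (cases k) (simp_all add: numeral_2_eq_2 algebra_simps)
  qed simp
  then have "int k ^ 2 - int (2 * m + 1) * int k = int (2 * (k choose 2)) - int (2 * (m * k))"
    by (cases k) (simp_all add: power2_eq_square algebra_simps)
  then have "q powi (int k ^ 2 - int (2 * m + 1) * int k) = q ^ (2 * (k choose 2)) / q ^ (2 * (m * k))"
    by (simp only: power_int_diff[OF disjI1[OF assms]] power_int_of_nat)
  then show ?thesis
    by (simp add: power_mult power_inverse divide_inverse)
qed

lemma terminating_identity_odd:
  fixes q x :: "'a::field"
  assumes "q \<noteq> 0" and not_root_of_unity: "\<And>i. 0 < i \<Longrightarrow> q ^ i \<noteq> 1" and n: "n = 2 * m + 1"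
  shows "(\<Sum>k<n. qpoch (q ^ n * q) (q ^ 2) k * qpoch (q / q ^ n) (q ^ 2) k
              / (qpoch (q ^ 2) (q ^ 2) k)\<^sup>2 * x ^ k)
       = (\<Sum>k\<le>m. (qbinom (q ^ 2) m k)\<^sup>2 * q powi (int k ^ 2 - int n * int k) * (- x) ^ k
              * qpoch x (q ^ 2) (m - k))"
proof -
  define p where "p = q ^ 2"
  have "p \<noteq> 0"
    using \<open>q \<noteq> 0\<close> by (simp add: p_def)
  have p_not_root_of_unity: "p ^ i \<noteq> 1" if "0 < i" for i
    using not_root_of_unity[of "2 * i"] that by (simp add: p_def power_mult)
  have qn: "q ^ n = q * p ^ m"
    unfolding n p_def by (simp add: power_mult)
  have vanish: "qpoch (inverse p ^ m) p k = 0" if "m < k" for k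
    using \<open>p \<noteq> 0\<close> that by (intro qpoch_eq_0[of _ _ m]) (simp_all flip: power_mult_distrib)
  from qn have aq: "q ^ n * q = p ^ Suc m" and q_over_a: "q / q ^ n = inverse p ^ m"
    using \<open>q \<noteq> 0\<close> by (simp_all add: p_def power_inverse power2_eq_square inverse_eq_divide power_one_over)
  have "(\<Sum>k<n. qpoch (q ^ n * q) (q ^ 2) k * qpoch (q / q ^ n) (q ^ 2) k
              / (qpoch (q ^ 2) (q ^ 2) k)\<^sup>2 * x ^ k)
      = (\<Sum>k\<le>m. qpoch (p ^ Suc m) p k * qpoch (inverse p ^ m) p k / (qpoch p p k)\<^sup>2 * x ^ k)"
    unfolding p_def[symmetric] aq q_over_a by (intro sum.mono_neutral_right) (auto simp: n vanish)
  also have "\<dots> = (\<Sum>k\<le>m. (-1) ^ k * (qbinom p m k)\<^sup>2 * p ^ (k choose 2) * inverse p ^ (m * k)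
                   * x ^ k * qpoch x p (m - k))"
    by (rule terminating_identity[OF p_not_root_of_unity \<open>p \<noteq> 0\<close>])
  also have "\<dots> = (\<Sum>k\<le>m. (qbinom (q ^ 2) m k)\<^sup>2 * q powi (int k ^ 2 - int n * int k) * (- x) ^ k
              * qpoch x (q ^ 2) (m - k))"
    unfolding n power_int_odd_quadratic[OF \<open>q \<noteq> 0\<close>] p_def by (simp add: power_minus[of x] mult_ac)
  finally show ?thesis .
qed

section \<open>Congruences in the localisation at a polynomial\<close>

lemma emb_0 [simp]: "emb 0 = 0"
  by (simp add: emb_def Zero_fract_def)

lemma emb_1 [simp]: "emb 1 = 1"
  by (simp add: emb_def One_fract_def)

lemma emb_add [simp]: "emb (a + b) = emb a + emb b"
  by (simp add: emb_def)

lemma emb_diff [simp]: "emb (a - b) = emb a - emb b"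
  by (simp add: emb_def)

lemma emb_uminus [simp]: "emb (- a) = - emb a"
  by (simp add: emb_def)

lemma emb_mult [simp]: "emb (a * b) = emb a * emb b"
  by (simp add: emb_def)

lemma emb_power [simp]: "emb (a ^ k) = emb a ^ k"
  by (induction k) simp_all

lemma emb_eq_iff [simp]: "emb a = emb b \<longleftrightarrow> a = b"
  by (simp add: emb_def eq_fract)

lemma emb_eq_0_iff [simp]: "emb a = 0 \<longleftrightarrow> a = 0"
  using emb_eq_iff[of a 0] by simp

lemma emb_qpoch: "emb (qpoch y q k) = qpoch (emb y) (emb q) k"
  by (induction k) (simp_all add: qpoch_Suc)

text \<open>Congruence modulo P among fractions with denominators coprime to P (cong_at) is, unlike
  rcong, compatible with products.\<close>

definition integral_at :: "mpoly3 \<Rightarrow> rfun3 \<Rightarrow> bool" where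
  "integral_at P F \<longleftrightarrow> (\<exists>C D. D \<noteq> 0 \<and> coprime D P \<and> F = emb C / emb D)"

lemma integral_at_emb [simp]: "integral_at P (emb C)"
  unfolding integral_at_def by (intro exI[of _ C] exI[of _ 1]) simp

lemma integral_at_1 [simp]: "integral_at P 1"
  using integral_at_emb[of P 1] by simp

lemma integral_at_inverse: "D \<noteq> 0 \<Longrightarrow> coprime D P \<Longrightarrow> integral_at P (inverse (emb D))"
  unfolding integral_at_def by (intro exI[of _ 1] exI[of _ D]) (simp add: inverse_eq_divide)

lemma integral_atE:
  assumes "integral_at P F"
  obtains C D where "D \<noteq> 0" "coprime D P" "F = emb C / emb D"
  using assms unfolding integral_at_def by blast

lemma integral_at_mult [intro]:
  assumes "integral_at P F" "integral_at P G"
  shows "integral_at P (F * G)"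
proof -
  obtain C D C' D' where "D \<noteq> 0" "coprime D P" "F = emb C / emb D"
    and "D' \<noteq> 0" "coprime D' P" "G = emb C' / emb D'"
    using assms by (meson integral_atE)
  then show ?thesis
    unfolding integral_at_def by (intro exI[of _ "C * C'"] exI[of _ "D * D'"]) simp
qed

lemma integral_at_add [intro]:
  assumes "integral_at P F" "integral_at P G"
  shows "integral_at P (F + G)"
proof -
  obtain C D C' D' where "D \<noteq> 0" "coprime D P" "F = emb C / emb D"
    and "D' \<noteq> 0" "coprime D' P" "G = emb C' / emb D'"
    using assms by (meson integral_atE)
  then show ?thesis
    unfolding integral_at_def
    by (intro exI[of _ "C * D' + C' * D"] exI[of _ "D * D'"]) (simp add: field_simps)
qed

lemma integral_at_diff [intro]:
  assumes "integral_at P F" "integral_at P G"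
  shows "integral_at P (F - G)"
proof -
  have "integral_at P (F + emb (- 1) * G)"
    using assms by (intro integral_at_add integral_at_mult integral_at_emb)
  then show ?thesis
    by simp
qed

lemma integral_at_power [intro]: "integral_at P F \<Longrightarrow> integral_at P (F ^ k)"
  by (induction k) auto

lemma integral_at_prod: "(\<And>i. i \<in> S \<Longrightarrow> integral_at P (f i)) \<Longrightarrow> integral_at P (\<Prod>i\<in>S. f i)"
  by (induction S rule: infinite_finite_induct) auto

definition cong_at :: "mpoly3 \<Rightarrow> rfun3 \<Rightarrow> rfun3 \<Rightarrow> bool" where
  "cong_at P F G \<longleftrightarrow> (\<exists>I. integral_at P I \<and> F - G = emb P * I)"

lemma cong_atI: "integral_at P I \<Longrightarrow> F - G = emb P * I \<Longrightarrow> cong_at P F G"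
  unfolding cong_at_def by blast

lemma cong_at_refl: "cong_at P F F"
  by (rule cong_atI[of P 0]) (simp_all flip: emb_0)

lemma cong_at_add:
  assumes "cong_at P F F'" "cong_at P G G'"
  shows "cong_at P (F + G) (F' + G')"
proof -
  obtain I J where "integral_at P I" "F - F' = emb P * I" "integral_at P J" "G - G' = emb P * J"
    using assms unfolding cong_at_def by blast
  then show ?thesis
    by (intro cong_atI[of P "I + J"]) (auto simp: algebra_simps)
qed

lemma cong_at_mult_right:
  assumes "cong_at P F F'" "integral_at P G"
  shows "cong_at P (F * G) (F' * G)"
proof -
  obtain I where "integral_at P I" "F - F' = emb P * I"
    using assms unfolding cong_at_def by blast
  then show ?thesis
    using assms(2) by (intro cong_atI[of P "I * G"]) (auto simp: algebra_simps)
qed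

lemma cong_at_mult:
  assumes "cong_at P F F'" "cong_at P G G'" "integral_at P F" "integral_at P G'"
  shows "cong_at P (F * G) (F' * G')"
proof -
  obtain I J where "integral_at P I" "F - F' = emb P * I" "integral_at P J" "G - G' = emb P * J"
    using assms(1,2) unfolding cong_at_def by blast
  moreover have "F * G - F' * G' = F * (G - G') + (F - F') * G'"
    by (simp add: algebra_simps)
  ultimately have "F * G - F' * G' = emb P * (F * J + I * G')"
    by (simp add: algebra_simps)
  then show ?thesis
    using assms(3,4) \<open>integral_at P I\<close> \<open>integral_at P J\<close> by (intro cong_atI[of P "F * J + I * G'"]) auto
qed

lemma cong_at_sum:
  "(\<And>i. i \<in> S \<Longrightarrow> cong_at P (f i) (g i)) \<Longrightarrow> cong_at P (\<Sum>i\<in>S. f i) (\<Sum>i\<in>S. g i)"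
  by (induction S rule: infinite_finite_induct) (simp_all add: cong_at_refl cong_at_add)

lemma cong_at_prod:
  assumes "\<And>i. i \<in> S \<Longrightarrow> cong_at P (f i) (g i)"
    and "\<And>i. i \<in> S \<Longrightarrow> integral_at P (f i)" and "\<And>i. i \<in> S \<Longrightarrow> integral_at P (g i)"
  shows "cong_at P (\<Prod>i\<in>S. f i) (\<Prod>i\<in>S. g i)"
  using assms
  by (induction S rule: infinite_finite_induct) (simp_all add: cong_at_refl cong_at_mult integral_at_prod)

lemma rcong_if_cong_at:
  assumes "cong_at P F G"
  shows "rcong F G P"
proof -
  obtain C D where "coprime D P" "F - G = emb P * (emb C / emb D)"
    using assms unfolding cong_at_def integral_at_def by blast
  then show ?thesis
    unfolding rcong_def by (intro exI[of _ C] exI[of _ D]) simp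
qed

section \<open>Coprimality with the modulus\<close>

lemma coprime_const_polyI:
  fixes c :: "'a::{idom_divide,algebraic_semidom}"
  assumes "c \<noteq> 0" and "coprime c (coeff g i)"
  shows "coprime [:c:] g"
proof (rule coprimeI)
  fix d
  assume "d dvd [:c:]" and "d dvd g"
  from \<open>d dvd [:c:]\<close> have "degree d = 0"
    using dvd_imp_degree_le[of d "[:c:]"] assms(1) by simp
  then have d: "d = [:coeff d 0:]"
    by (rule degree_eq_zeroE) simp
  have "coeff d 0 dvd c"
    using \<open>d dvd [:c:]\<close> by (subst (asm) d) simp
  moreover have "coeff d 0 dvd coeff g i"
    using \<open>d dvd g\<close> by (subst (asm) d) (simp add: const_poly_dvd_iff)
  ultimately have "is_unit (coeff d 0)"
    using coprime_common_divisor[OF assms(2)] by blast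
  then show "is_unit d"
    by (subst d) (simp add: is_unit_const_poly_iff)
qed

lemma var_a_power: "var_a ^ j = [:[:[:0, 1:] ^ j:]:]"
  by (simp add: var_a_def poly_const_pow)

lemma var_q_power: "var_q ^ j = [:[:0, 1:] ^ j:]"
  by (simp add: var_q_def poly_const_pow)

lemma coprime_var_a_var_q: "coprime var_a var_q"
proof -
  have "coprime [:[:0, 1:]:] [:0, 1 :: rat poly:]"
    by (rule coprime_const_polyI[where i = 1]) simp_all
  show ?thesis
    unfolding var_a_def var_q_def
    by (rule coprime_const_polyI[where i = 0]) (simp_all add: \<open>coprime [:[:0, 1:]:] [:0, 1:]\<close>)
qed

lemma coprime_one_minus_var_a_var_q_power:
  assumes "0 < j"
  shows "coprime (1 - var_a ^ j) (1 - var_q ^ j)"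
proof -
  have "1 - var_a ^ j = [:[:1 - [:0, 1:] ^ j:]:]"
    by (simp add: var_a_power one_pCons)
  moreover have "(1 - [:0, 1:] ^ j :: rat poly) \<noteq> 0"
    using assms monom_eq_1_iff[of "1::rat" j] by (simp add: monom_altdef)
  moreover have "coeff (coeff (1 - var_q ^ j) 0) 0 = 1"
    using assms by (simp add: var_q_power one_pCons coeff_0_power)
  ultimately show ?thesis
    by (auto intro!: coprime_const_polyI[where i = 0])
qed

lemma diff_dvd_power_diff: "x - y dvd x ^ k - y ^ k"
  for x y :: "'a::comm_ring_1"
  by (simp add: power_diff_sumr2)

lemma coprime_one_minus_if_dvd:
  fixes x y :: "'a::ring_gcd"
  assumes "x dvd y"
  shows "coprime x (1 - y)"
proof (rule coprimeI)
  fix d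
  assume "d dvd x" and "d dvd 1 - y"
  then have "d dvd (1 - y) + y"
    using assms by (meson dvd_add dvd_trans)
  then show "is_unit d"
    by simp
qed

lemma coprime_diff_if_dvd:
  fixes x y z :: "'a::ring_gcd"
  assumes "coprime x z" and "x dvd y"
  shows "coprime x (z - y)"
proof (rule coprimeI)
  fix d
  assume "d dvd x" and "d dvd z - y"
  then have "d dvd (z - y) + y"
    using assms(2) by (meson dvd_add dvd_trans)
  then show "is_unit d"
    using assms(1) \<open>d dvd x\<close> by (simp add: coprime_common_divisor)
qed

definition modulus :: "nat \<Rightarrow> mpoly3" where
  "modulus n = (1 - var_a * var_q ^ n) * (var_a - var_q ^ n)"

lemma coprime_var_a_modulus: "coprime var_a (modulus n)"
proof -
  have "coprime var_a (var_q ^ n - var_a)"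
    using coprime_var_a_var_q by (intro coprime_diff_if_dvd) simp_all
  then have "coprime var_a (- (var_a - var_q ^ n))"
    by simp
  then have "coprime var_a (var_a - var_q ^ n)"
    by (simp only: coprime_minus_right_iff)
  then show ?thesis
    by (simp add: modulus_def coprime_one_minus_if_dvd)
qed

lemma coprime_var_q_modulus:
  assumes "0 < n"
  shows "coprime var_q (modulus n)"
proof -
  have "var_q dvd var_q ^ n"
    using assms by (simp add: dvd_power)
  then have "coprime var_q (1 - var_a * var_q ^ n)" and "coprime var_q (var_a - var_q ^ n)"
    using coprime_var_a_var_q
    by (simp_all add: coprime_one_minus_if_dvd coprime_diff_if_dvd coprime_commute)
  then show ?thesis
    by (simp add: modulus_def)
qed

lemma coprime_one_minus_var_q_power_modulus:
  assumes "0 < j"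
  shows "coprime (1 - var_q ^ j) (modulus n)"
proof -
  have unit: "is_unit d" if "d dvd 1 - var_q ^ j" and "d dvd 1 - var_a ^ j" for d
    using coprime_common_divisor[OF coprime_one_minus_var_a_var_q_power[OF assms]] that by blast
  have power: "d dvd 1 - (var_q ^ n) ^ j" if "d dvd 1 - var_q ^ j" for d
  proof -
    have "(var_q ^ n) ^ j = (var_q ^ j) ^ n"
      by (simp flip: power_mult add: mult.commute)
    then show ?thesis
      using that diff_dvd_power_diff[of 1 "var_q ^ j" n] by (simp add: dvd_trans)
  qed
  have "coprime (1 - var_q ^ j) (1 - var_a * var_q ^ n)"
  proof (rule coprimeI)
    fix d
    assume d: "d dvd 1 - var_q ^ j" "d dvd 1 - var_a * var_q ^ n"
    have "d dvd 1 - (var_a * var_q ^ n) ^ j"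
      using d(2) diff_dvd_power_diff[of 1 "var_a * var_q ^ n" j] by (simp add: dvd_trans)
    with power[OF d(1)] have "d dvd (1 - (var_a * var_q ^ n) ^ j) - var_a ^ j * (1 - (var_q ^ n) ^ j)"
      by (blast intro: dvd_diff dvd_mult)
    also have "\<dots> = 1 - var_a ^ j"
      by (simp add: power_mult_distrib algebra_simps)
    finally show "is_unit d"
      using unit d(1) by blast
  qed
  moreover have "coprime (1 - var_q ^ j) (var_a - var_q ^ n)"
  proof (rule coprimeI)
    fix d
    assume d: "d dvd 1 - var_q ^ j" "d dvd var_a - var_q ^ n"
    have "d dvd var_a ^ j - (var_q ^ n) ^ j"
      using d(2) diff_dvd_power_diff[of var_a "var_q ^ n" j] by (simp add: dvd_trans)
    with power[OF d(1)] have "d dvd (1 - (var_q ^ n) ^ j) - (var_a ^ j - (var_q ^ n) ^ j)"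
      by (blast intro: dvd_diff)
    also have "\<dots> = 1 - var_a ^ j"
      by simp
    finally show "is_unit d"
      using unit d(1) by blast
  qed
  ultimately show ?thesis
    by (simp add: modulus_def)
qed

section \<open>Replacing a by q^n\<close>

lemma A_neq_0: "A \<noteq> 0"
  by (simp add: A_def var_a_def)

lemma Q_neq_0: "Q \<noteq> 0"
  by (simp add: Q_def var_q_def)

lemma Q_power_neq_1:
  assumes "0 < i"
  shows "Q ^ i \<noteq> 1"
proof -
  have "[:0, 1:] ^ i = (monom 1 i :: rat poly poly)"
    by (simp add: monom_altdef)
  then have "[:0, 1:] ^ i \<noteq> (1 :: rat poly poly)"
    using assms by (simp add: monom_eq_1_iff)
  then have "var_q ^ i \<noteq> 1"
    by (simp add: var_q_power one_pCons)
  then show ?thesis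
    using emb_eq_iff[of "var_q ^ i" 1] by (simp add: Q_def)
qed

lemma integral_at_inverse_A: "integral_at (modulus n) (inverse A)"
  using A_neq_0 coprime_var_a_modulus unfolding A_def by (intro integral_at_inverse) simp_all

lemma integral_at_inverse_Q: "0 < n \<Longrightarrow> integral_at (modulus n) (inverse Q)"
  using Q_neq_0 coprime_var_q_modulus unfolding Q_def by (intro integral_at_inverse) simp_all

lemma integral_at_inverse_qfact:
  assumes "0 < n"
  shows "integral_at (modulus n) (inverse (qpoch (Q ^ 2) (Q ^ 2) k))"
proof -
  have "qpoch (Q ^ 2) (Q ^ 2) k = emb (qpoch (var_q ^ 2) (var_q ^ 2) k)"
    by (simp add: emb_qpoch Q_def)
  moreover have "qpoch (Q ^ 2) (Q ^ 2) k \<noteq> 0"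
    using Q_power_neq_1 by (intro qpoch_self_neq_0) (simp flip: power_mult)
  moreover have "coprime (qpoch (var_q ^ 2) (var_q ^ 2) k) (modulus n)"
  proof -
    have factor: "var_q ^ 2 * (var_q ^ 2) ^ i = var_q ^ (2 * Suc i)" for i
      by (simp only: power_mult power_Suc)
    show ?thesis
      unfolding qpoch_def factor
      by (intro prod_coprime_left coprime_one_minus_var_q_power_modulus) simp
  qed
  ultimately show ?thesis
    by (simp add: integral_at_inverse)
qed

text \<open>The factor pair is invariant under a \<mapsto> 1 / a; hence replacing a by b changes it
  by a multiple of (1 - a b)(a - b), which for b = q^n is the modulus.\<close>

lemma reciprocal_factor_diff:
  fixes a b y :: "'a::field"
  assumes "a \<noteq> 0" "b \<noteq> 0"
  shows "(1 - a * y) * (1 - y / a) - (1 - b * y) * (1 - y / b) = (1 - a * b) * (a - b) * (y / (a * b))"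
  using assms by (simp add: field_simps)

lemma cong_at_qpoch_pair:
  assumes "0 < n"
  shows "cong_at (modulus n) (qpoch (A * Q) (Q ^ 2) k * qpoch (Q / A) (Q ^ 2) k)
                             (qpoch (Q ^ n * Q) (Q ^ 2) k * qpoch (Q / Q ^ n) (Q ^ 2) k)"
proof -
  define y where "y i = Q * (Q ^ 2) ^ i" for i
  have pair: "qpoch (a * Q) (Q ^ 2) k * qpoch (Q / a) (Q ^ 2) k = (\<Prod>i<k. (1 - a * y i) * (1 - y i / a))" for a
    by (simp add: qpoch_mult_qpoch y_def mult.assoc)
  have integral_y: "integral_at (modulus n) (y i)" for i
    by (simp add: y_def Q_def integral_at_mult integral_at_power)
  have integral_inverses: "integral_at (modulus n) (inverse A)" "integral_at (modulus n) (inverse (Q ^ n))"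
    using integral_at_inverse_A integral_at_power[OF integral_at_inverse_Q[OF assms], of n]
    by (simp_all add: power_inverse)
  have factor_diff: "(1 - A * y i) * (1 - y i / A) - (1 - Q ^ n * y i) * (1 - y i / Q ^ n)
      = emb (modulus n) * (y i * inverse A * inverse (Q ^ n))" for i
  proof -
    have "(1 - A * y i) * (1 - y i / A) - (1 - Q ^ n * y i) * (1 - y i / Q ^ n)
        = (1 - A * Q ^ n) * (A - Q ^ n) * (y i / (A * Q ^ n))"
      using A_neq_0 Q_neq_0 by (simp add: reciprocal_factor_diff)
    also have "\<dots> = emb (modulus n) * (y i * inverse A * inverse (Q ^ n))"
      by (simp add: modulus_def A_def Q_def divide_inverse mult_ac)
    finally show ?thesis .
  qed
  have "cong_at (modulus n) ((1 - A * y i) * (1 - y i / A)) ((1 - Q ^ n * y i) * (1 - y i / Q ^ n))" for i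
    using factor_diff by (rule cong_atI[rotated]) (use integral_y integral_inverses in auto)
  moreover have "integral_at (modulus n) ((1 - A * y i) * (1 - y i / A))" for i
    using integral_y integral_inverses by (simp add: A_def divide_inverse integral_at_mult integral_at_diff)
  moreover have "integral_at (modulus n) ((1 - Q ^ n * y i) * (1 - y i / Q ^ n))" for i
    using integral_y integral_inverses
    by (simp add: Q_def divide_inverse integral_at_mult integral_at_diff integral_at_power)
  ultimately show ?thesis
    unfolding pair by (intro cong_at_prod)
qed

theorem theorem4p1:
  fixes n :: nat
  assumes "odd n"
  shows "rcong
    (\<Sum>k<n. qpoch (A * Q) (Q ^ 2) k * qpoch (Q / A) (Q ^ 2) k
              / (qpoch (Q ^ 2) (Q ^ 2) k) ^ 2 * X ^ k)
    (\<Sum>k\<le>(n - 1) div 2. (qbinom (Q ^ 2) ((n - 1) div 2) k) ^ 2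
              * Q powi (int k ^ 2 - int n * int k) * (- X) ^ k
              * qpoch X (Q ^ 2) ((n - 1) div 2 - k))
    ((1 - var_a * var_q ^ n) * (var_a - var_q ^ n))"
proof -
  obtain m where n: "n = 2 * m + 1"
    using assms oddE by blast
  then have "0 < n" and m: "(n - 1) div 2 = m"
    by simp_all
  let ?W = "\<lambda>k. X ^ k / (qpoch (Q ^ 2) (Q ^ 2) k) ^ 2"
  have "integral_at (modulus n) (?W k)" for k
    using integral_at_inverse_qfact[OF \<open>0 < n\<close>, of k]
    by (simp add: X_def divide_inverse integral_at_mult integral_at_power flip: power_inverse)
  then have "cong_at (modulus n)
      (\<Sum>k<n. qpoch (A * Q) (Q ^ 2) k * qpoch (Q / A) (Q ^ 2) k * ?W k)
      (\<Sum>k<n. qpoch (Q ^ n * Q) (Q ^ 2) k * qpoch (Q / Q ^ n) (Q ^ 2) k * ?W k)"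
    by (intro cong_at_sum cong_at_mult_right cong_at_qpoch_pair \<open>0 < n\<close>)
  also have "(\<Sum>k<n. qpoch (Q ^ n * Q) (Q ^ 2) k * qpoch (Q / Q ^ n) (Q ^ 2) k * ?W k)
    = (\<Sum>k\<le>m. (qbinom (Q ^ 2) m k) ^ 2 * Q powi (int k ^ 2 - int n * int k) * (- X) ^ k
              * qpoch X (Q ^ 2) (m - k))"
    using terminating_identity_odd[OF Q_neq_0 Q_power_neq_1 n] by simp
  finally show ?thesis
    unfolding m modulus_def[symmetric] by (intro rcong_if_cong_at) simp
qed

end
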